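(* Let $n\ge 2$, $\mathbf A\in\mathcal G_n$, and let \[T=\{(u,V)\in\mathcal D(U(\mathbf A),\mathbf 2)\times\mathcal P(\{0,\dots,n-1\}) : 0,n-1\in V \text{ and } |{\uparrow}u|+1=|V|\}.\] Define $\iota_{\mathbf A}\colon\mathcal G_n(\mathbf A,\mathbf C_n)\to T$ by $\iota_{\mathbf A}(x)=(\omega\circ x,\operatorname{ran}x)$, and define $\gamma_{\mathbf A}$ on $T$ as follows: if $(u,V)\in T$ and $V=\{i_0,i_1,\dots,i_m\}$ with $0=i_0<i_1<\dots<i_m=n-1$, then for $a\in A$, $\gamma_{\mathbf A}(u,V)(a)=i_k$ where $k=|\{v\in{\uparrow}u: v(a)=1\}|$. Then $\iota_{\mathbf A}$ is a well-defined map into $T$, $\gamma_{\mathbf A}$ is a well-defined map from $T$ into $\mathcal G_n(\mathbf A,\mathbf C_n)$, and $\iota_{\mathbf A}$ and $\gamma_{\mathbf A}$ are mutually inverse bijections. In particular, the map $x\mapsto\omega\circ x$ is a surjection from $\mathcal G_n(\mathbf A,\mathbf C_n)$ onto $\mathcal D(U(\mathbf A),\mathbf 2)$.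
   Context: Fix an integer $n\ge 2$. $\mathbf C_n$ is the Heyting algebra whose universe is the chain $\{0<1<\dots<n-1\}$, with lattice operations min and max, $\bot=0$, $\top=n-1$, and $a\to b=\top$ if $a\le b$, $a\to b=b$ if $b<a$. $\mathcal G_n$ denotes the class of algebras isomorphic to subalgebras of direct powers of $\mathbf C_n$. For $\mathbf A\in\mathcal G_n$, $\mathcal G_n(\mathbf A,\mathbf C_n)$ is the set of Heyting algebra homomorphisms $\mathbf A\to\mathbf C_n$, and $\operatorname{ran}x$ is the image of $x$. $U(\mathbf A)$ is the bounded distributive lattice reduct of $\mathbf A$; $\mathbf 2$ is the two-element bounded lattice; $\mathcal D(U(\mathbf A),\mathbf 2)$ is the set of bounded-lattice homomorphisms $U(\mathbf A)\to\mathbf 2$, ordered pointwise, and ${\uparrow}u$ is the set of elements $\ge u$. $\omega\colon U(\mathbf C_n)\to\mathbf 2$ is the lattice homomorphism with $\omega(\top)=1$ and $\omega(k)=0$ for $k<\top$. $\mathcal P(\{0,\dots,n-1\})$ is the power set of $\{0,\dots,n-1\}$. *)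

theory Defs
  imports "HOL-Library.FuncSet"
begin

record 'a heyting_alg =
  carrier :: "'a set"
  meet :: "'a \<Rightarrow> 'a \<Rightarrow> 'a"
  join :: "'a \<Rightarrow> 'a \<Rightarrow> 'a"
  himp :: "'a \<Rightarrow> 'a \<Rightarrow> 'a"
  hbot :: 'a
  htop :: 'a

text \<open>The chain C_n on {0,...,n-1}.\<close>
definition C_imp :: "nat \<Rightarrow> nat \<Rightarrow> nat \<Rightarrow> nat" where
  "C_imp n a b = (if a \<le> b then n - 1 else b)"

definition in_Gn :: "nat \<Rightarrow> 'i set \<Rightarrow> 'a heyting_alg \<Rightarrow> bool" where
  "in_Gn n I A \<longleftrightarrow>
     (\<forall>a\<in>carrier A. \<forall>b\<in>carrier A.
        meet A a b \<in> carrier A \<and> join A a b \<in> carrier A \<and> himp A a b \<in> carrier A) \<and>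
     hbot A \<in> carrier A \<and> htop A \<in> carrier A \<and>
     (\<exists>h. h \<in> carrier A \<rightarrow> (I \<rightarrow>\<^sub>E {..<n}) \<and> inj_on h (carrier A) \<and>
        (\<forall>a\<in>carrier A. \<forall>b\<in>carrier A.
           h (meet A a b) = (\<lambda>i\<in>I. min (h a i) (h b i)) \<and>
           h (join A a b) = (\<lambda>i\<in>I. max (h a i) (h b i)) \<and>
           h (himp A a b) = (\<lambda>i\<in>I. C_imp n (h a i) (h b i))) \<and>
        h (hbot A) = (\<lambda>i\<in>I. 0) \<and> h (htop A) = (\<lambda>i\<in>I. n - 1))"

definition Hom_C :: "nat \<Rightarrow> 'a heyting_alg \<Rightarrow> ('a \<Rightarrow> nat) set" where
  "Hom_C n A = {x \<in> carrier A \<rightarrow>\<^sub>E {..<n}.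
      (\<forall>a\<in>carrier A. \<forall>b\<in>carrier A.
         x (meet A a b) = min (x a) (x b) \<and>
         x (join A a b) = max (x a) (x b) \<and>
         x (himp A a b) = C_imp n (x a) (x b)) \<and>
      x (hbot A) = 0 \<and> x (htop A) = n - 1}"

text \<open>Bounded-lattice homomorphisms U(A) \<rightarrow> 2, with 2 = bool (False < True).\<close>
definition D2 :: "'a heyting_alg \<Rightarrow> ('a \<Rightarrow> bool) set" where
  "D2 A = {u \<in> carrier A \<rightarrow>\<^sub>E (UNIV :: bool set).
      (\<forall>a\<in>carrier A. \<forall>b\<in>carrier A.
         u (meet A a b) = (u a \<and> u b) \<and> u (join A a b) = (u a \<or> u b)) \<and>
      u (hbot A) = False \<and> u (htop A) = True}"

definition up2 :: "'a heyting_alg \<Rightarrow> ('a \<Rightarrow> bool) \<Rightarrow> ('a \<Rightarrow> bool) set" where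
  "up2 A u = {v \<in> D2 A. \<forall>a\<in>carrier A. u a \<longrightarrow> v a}"

definition omega :: "nat \<Rightarrow> nat \<Rightarrow> bool" where
  "omega n k = (k = n - 1)"

definition T_set :: "nat \<Rightarrow> 'a heyting_alg \<Rightarrow> (('a \<Rightarrow> bool) \<times> nat set) set" where
  "T_set n A = {(u, V). u \<in> D2 A \<and> V \<subseteq> {..<n} \<and> 0 \<in> V \<and> n - 1 \<in> V \<and>
                   card (up2 A u) + 1 = card V}"

definition iota :: "nat \<Rightarrow> 'a heyting_alg \<Rightarrow> ('a \<Rightarrow> nat) \<Rightarrow> ('a \<Rightarrow> bool) \<times> nat set" where
  "iota n A x = (\<lambda>a\<in>carrier A. omega n (x a), x ` carrier A)"

text \<open>gamma(u,V)(a) = i_k, the k-th smallest element of V (counting from 0),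
  where k = |{v \<in> up u. v(a) = 1}|.\<close>
definition gamma :: "'a heyting_alg \<Rightarrow> ('a \<Rightarrow> bool) \<times> nat set \<Rightarrow> ('a \<Rightarrow> nat)" where
  "gamma A t = (case t of (u, V) \<Rightarrow>
      (\<lambda>a\<in>carrier A. sorted_list_of_set V ! card {v \<in> up2 A u. v a}))"

end

theory Submission
  imports Defs
begin

text \<open>A homomorphism x from A to C_n is determined by u = omega o x and its range W: the lattice
  homomorphisms above u are exactly the thresholds a \<mapsto> (j \<le> x a) for the nonzero j in W, so
  the number of them that hold at a is the position of x a in W, and gamma recovers x. Conversely,
  given u, the relation u (a \<rightarrow> b) is a total preorder on A, and the equation
  (p0 \<rightarrow> p1) \<or> (p1 \<rightarrow> p2) \<or> \<dots> \<or> (p(n-1) \<rightarrow> pn) = \<top>,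
  valid in C_n and hence in A, shows that its quotient is a chain with at most n elements.
  Embedding this chain into C_n, bottom class at 0 and top class at n - 1, gives a homomorphism
  lifting u; composing it with the order isomorphism from its range onto V yields gamma (u, V).\<close>

section \<open>Ranks in finite sets of naturals\<close>

definition rank :: "nat set \<Rightarrow> nat \<Rightarrow> nat" where
  "rank W y = card {j \<in> W. j < y}"

lemma rank_strict_mono_on:
  assumes "finite W"
  shows "strict_mono_on W (rank W)"
proof (rule strict_mono_onI)
  fix y z assume "y \<in> W" "y < z"
  then have "{j \<in> W. j < y} \<subset> {j \<in> W. j < z}" by auto
  then show "rank W y < rank W z" unfolding rank_def using assms by (intro psubset_card_mono) auto
qed

lemma rank_less_card:
  assumes "finite W" "y \<in> W"
  shows "rank W y < card W"
proof -
  have "{j \<in> W. j < y} \<subset> W" using assms(2) by auto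
  then show ?thesis unfolding rank_def using assms(1) by (simp add: psubset_card_mono)
qed

lemma rank_image:
  assumes "finite W"
  shows "rank W ` W = {..<card W}"
proof -
  have "card (rank W ` W) = card {..<card W}"
    using strict_mono_on_imp_inj_on[OF rank_strict_mono_on[OF assms]] by (simp add: card_image)
  moreover have "rank W ` W \<subseteq> {..<card W}" using rank_less_card[OF assms] by auto
  ultimately show ?thesis by (simp add: card_subset_eq)
qed

lemma rank_greatest:
  assumes "finite W" "y \<in> W" "\<forall>j\<in>W. j \<le> y"
  shows "rank W y = card W - 1"
proof -
  have "{j \<in> W. j < y} = W - {y}" using assms(3) by force
  then show ?thesis using assms(1,2) by (simp add: rank_def)
qed

lemma rank_set_nth:
  fixes L :: "nat list"
  assumes sorted: "sorted_wrt (<) L" and k: "k < length L"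
  shows "rank (set L) (L ! k) = k"
proof -
  have "{j \<in> set L. j < L ! k} = (!) L ` {..<k}"
  proof (intro equalityI subsetI)
    fix j assume "j \<in> {j \<in> set L. j < L ! k}"
    then obtain i where i: "i < length L" "j = L ! i" "L ! i < L ! k"
      by (auto simp: in_set_conv_nth)
    have "i < k"
      using sorted i k by (metis linorder_neqE_nat order.asym sorted_wrt_iff_nth_less)
    then show "j \<in> (!) L ` {..<k}" using i by auto
  qed (use sorted k in \<open>auto simp: sorted_wrt_iff_nth_less\<close>)
  moreover have "inj_on ((!) L) {..<k}"
    using sorted k by (auto simp: inj_on_def nth_eq_iff_index_eq strict_sorted_iff)
  ultimately show ?thesis by (simp add: rank_def card_image)
qed

lemma sorted_list_of_set_nth_rank:
  assumes "finite W" "y \<in> W"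
  shows "sorted_list_of_set W ! rank W y = y"
proof -
  let ?L = "sorted_list_of_set W"
  obtain k where k: "k < length ?L" "?L ! k = y"
    using assms by (metis in_set_conv_nth set_sorted_list_of_set)
  have "rank W y = k"
    using rank_set_nth[OF _ k(1)] k(2) assms(1) by (simp add: strict_sorted_list_of_set)
  then show ?thesis using k(2) by simp
qed

lemma sorted_list_of_set_rank_iso:
  assumes W: "finite W" and V: "finite V" and card: "card W = card V"
  shows "strict_mono_on W (\<lambda>y. sorted_list_of_set V ! rank W y)"
    and "(\<lambda>y. sorted_list_of_set V ! rank W y) ` W = V"
proof -
  let ?L = "sorted_list_of_set V"
  show "strict_mono_on W (\<lambda>y. ?L ! rank W y)"
  proof (rule strict_mono_onI)
    fix y z assume yz: "y \<in> W" "z \<in> W" "y < z"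
    then have "rank W y < rank W z" "rank W z < length ?L"
      using strict_mono_onD[OF rank_strict_mono_on[OF W]] rank_less_card[OF W] card V by auto
    then show "?L ! rank W y < ?L ! rank W z"
      using strict_sorted_list_of_set[of V] by (simp add: sorted_wrt_iff_nth_less)
  qed
  have "(\<lambda>y. ?L ! rank W y) ` W = (!) ?L ` {..<length ?L}"
    using rank_image[OF W] card V by (simp add: image_image[symmetric])
  also have "\<dots> = set ?L" by (auto simp: in_set_conv_nth simp del: length_sorted_list_of_set)
  also have "\<dots> = V" using V by simp
  finally show "(\<lambda>y. ?L ! rank W y) ` W = V" .
qed

lemma Hom_C_simps:
  assumes "x \<in> Hom_C n A"
  shows "\<And>a b. a \<in> carrier A \<Longrightarrow> b \<in> carrier A \<Longrightarrow> x (meet A a b) = min (x a) (x b)"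
    and "\<And>a b. a \<in> carrier A \<Longrightarrow> b \<in> carrier A \<Longrightarrow> x (join A a b) = max (x a) (x b)"
    and "\<And>a b. a \<in> carrier A \<Longrightarrow> b \<in> carrier A \<Longrightarrow> x (himp A a b) = C_imp n (x a) (x b)"
    and "x (hbot A) = 0" and "x (htop A) = n - 1"
  using assms unfolding Hom_C_def by auto

lemma Hom_C_less: "x \<in> Hom_C n A \<Longrightarrow> a \<in> carrier A \<Longrightarrow> x a < n"
  unfolding Hom_C_def by auto

lemma Hom_C_extensional: "x \<in> Hom_C n A \<Longrightarrow> a \<notin> carrier A \<Longrightarrow> x a = undefined"
  by (rule PiE_arb[of _ _ "\<lambda>_. {..<n}"]) (simp_all add: Hom_C_def)

lemma Hom_C_range_subset: "x \<in> Hom_C n A \<Longrightarrow> x ` carrier A \<subseteq> {..<n}"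
  using Hom_C_less by auto

lemma finite_Hom_C_range: "x \<in> Hom_C n A \<Longrightarrow> finite (x ` carrier A)"
  by (meson Hom_C_range_subset finite_lessThan finite_subset)

lemma D2_simps:
  assumes "u \<in> D2 A"
  shows "\<And>a b. a \<in> carrier A \<Longrightarrow> b \<in> carrier A \<Longrightarrow> u (meet A a b) = (u a \<and> u b)"
    and "\<And>a b. a \<in> carrier A \<Longrightarrow> b \<in> carrier A \<Longrightarrow> u (join A a b) = (u a \<or> u b)"
    and "u (hbot A) = False" and "u (htop A) = True"
  using assms unfolding D2_def by auto

lemma D2_extensional: "u \<in> D2 A \<Longrightarrow> a \<notin> carrier A \<Longrightarrow> u a = undefined"
  by (rule PiE_arb[of _ _ "\<lambda>_. UNIV"]) (simp_all add: D2_def)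

fun himp_steps_join :: "'a heyting_alg \<Rightarrow> 'a list \<Rightarrow> 'a" where
  "himp_steps_join A (p # q # r) = join A (himp A p q) (himp_steps_join A (q # r))"
| "himp_steps_join A _ = hbot A"

lemma length_successively_descending:
  fixes f :: "'a \<Rightarrow> nat"
  assumes "successively (\<lambda>p q. f q < f p) xs" "xs \<noteq> []"
  shows "length xs \<le> f (hd xs) + 1"
  using assms
proof (induction xs rule: induct_list012)
  case (3 p q r)
  then show ?case by simp
qed simp_all

section \<open>Algebras in G_n\<close>

lemma C_imp_identities:
  fixes p q r :: nat
  shows "C_imp n p p = n - 1"
    and "p < n \<Longrightarrow> q < n \<Longrightarrow> min p (C_imp n p q) = min p q"
    and "q < n \<Longrightarrow> C_imp n q (C_imp n p q) = n - 1"
    and "q < n \<Longrightarrow> max (C_imp n (C_imp n p q) q) (C_imp n p q) = n - 1"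
    and "C_imp n 0 p = n - 1"
    and "p < n \<Longrightarrow> C_imp n (n - Suc 0) p = p"
    and "p < n \<Longrightarrow> q < n \<Longrightarrow> r < n \<Longrightarrow>
      min (min (C_imp n p q) (C_imp n q r)) (C_imp n p r) = min (C_imp n p q) (C_imp n q r)"
    and "p < n \<Longrightarrow> q < n \<Longrightarrow> r < n \<Longrightarrow>
      C_imp n (min p q) r = max (C_imp n p r) (C_imp n q r)"
    and "p < n \<Longrightarrow> q < n \<Longrightarrow> r < n \<Longrightarrow>
      C_imp n r (max p q) = max (C_imp n r p) (C_imp n r q)"
  by (auto simp: C_imp_def min_def max_def)

locale Gn_algebra =
  fixes n :: nat and A :: "'a heyting_alg" and I :: "'i set" and h :: "'a \<Rightarrow> 'i \<Rightarrow> nat"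
  assumes n_ge_2: "n \<ge> 2"
    and meet_closed: "\<And>a b. a \<in> carrier A \<Longrightarrow> b \<in> carrier A \<Longrightarrow> meet A a b \<in> carrier A"
    and join_closed: "\<And>a b. a \<in> carrier A \<Longrightarrow> b \<in> carrier A \<Longrightarrow> join A a b \<in> carrier A"
    and himp_closed: "\<And>a b. a \<in> carrier A \<Longrightarrow> b \<in> carrier A \<Longrightarrow> himp A a b \<in> carrier A"
    and hbot_closed: "hbot A \<in> carrier A" and htop_closed: "htop A \<in> carrier A"
    and h_funcset: "h \<in> carrier A \<rightarrow> (I \<rightarrow>\<^sub>E {..<n})"
    and h_inj: "inj_on h (carrier A)"
    and h_meet: "\<And>a b. a \<in> carrier A \<Longrightarrow> b \<in> carrier A \<Longrightarrow> h (meet A a b) = (\<lambda>i\<in>I. min (h a i) (h b i))"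
    and h_join: "\<And>a b. a \<in> carrier A \<Longrightarrow> b \<in> carrier A \<Longrightarrow> h (join A a b) = (\<lambda>i\<in>I. max (h a i) (h b i))"
    and h_himp: "\<And>a b. a \<in> carrier A \<Longrightarrow> b \<in> carrier A \<Longrightarrow> h (himp A a b) = (\<lambda>i\<in>I. C_imp n (h a i) (h b i))"
    and h_hbot: "h (hbot A) = (\<lambda>i\<in>I. 0)" and h_htop: "h (htop A) = (\<lambda>i\<in>I. n - 1)"

lemma in_Gn_imp_Gn_algebra:
  assumes "n \<ge> 2" "in_Gn n I A"
  obtains h where "Gn_algebra n A I h"
proof -
  from assms(2) obtain h where "h \<in> carrier A \<rightarrow> (I \<rightarrow>\<^sub>E {..<n})" "inj_on h (carrier A)"
    "\<forall>a\<in>carrier A. \<forall>b\<in>carrier A.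
       h (meet A a b) = (\<lambda>i\<in>I. min (h a i) (h b i)) \<and>
       h (join A a b) = (\<lambda>i\<in>I. max (h a i) (h b i)) \<and>
       h (himp A a b) = (\<lambda>i\<in>I. C_imp n (h a i) (h b i))"
    "h (hbot A) = (\<lambda>i\<in>I. 0)" "h (htop A) = (\<lambda>i\<in>I. n - 1)"
    unfolding in_Gn_def by blast
  with assms show thesis by (intro that[of h], unfold_locales) (auto simp: in_Gn_def)
qed

context Gn_algebra
begin

lemmas closed = meet_closed join_closed himp_closed hbot_closed htop_closed
lemmas h_simps = h_meet h_join h_himp h_hbot h_htop

lemma h_less: "a \<in> carrier A \<Longrightarrow> i \<in> I \<Longrightarrow> h a i < n"
  using h_funcset by auto

lemma pointwise_eqI:
  assumes "s \<in> carrier A" "t \<in> carrier A" "\<And>i. i \<in> I \<Longrightarrow> h s i = h t i"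
  shows "s = t"
proof -
  have "h s \<in> I \<rightarrow>\<^sub>E {..<n}" "h t \<in> I \<rightarrow>\<^sub>E {..<n}" using h_funcset assms by auto
  then have "h s = h t" using assms(3) by (intro ext) (metis PiE_arb)
  then show ?thesis using h_inj assms(1,2) by (auto dest: inj_onD)
qed

text \<open>Identities of C_n hold in A because they hold in every coordinate of the embedding h.\<close>

lemma
  shows himp_refl: "a \<in> carrier A \<Longrightarrow> himp A a a = htop A"
    and meet_himp: "a \<in> carrier A \<Longrightarrow> b \<in> carrier A \<Longrightarrow> meet A a (himp A a b) = meet A a b"
    and himp_himp_self: "a \<in> carrier A \<Longrightarrow> b \<in> carrier A \<Longrightarrow> himp A b (himp A a b) = htop A"
    and himp_himp_join:
      "a \<in> carrier A \<Longrightarrow> b \<in> carrier A \<Longrightarrow> join A (himp A (himp A a b) b) (himp A a b) = htop A"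
    and hbot_himp: "a \<in> carrier A \<Longrightarrow> himp A (hbot A) a = htop A"
    and htop_himp: "a \<in> carrier A \<Longrightarrow> himp A (htop A) a = a"
    and himp_trans: "a \<in> carrier A \<Longrightarrow> b \<in> carrier A \<Longrightarrow> c \<in> carrier A \<Longrightarrow>
      meet A (meet A (himp A a b) (himp A b c)) (himp A a c) = meet A (himp A a b) (himp A b c)"
    and himp_meet_left: "a \<in> carrier A \<Longrightarrow> b \<in> carrier A \<Longrightarrow> c \<in> carrier A \<Longrightarrow>
      himp A (meet A a b) c = join A (himp A a c) (himp A b c)"
    and himp_join_right: "a \<in> carrier A \<Longrightarrow> b \<in> carrier A \<Longrightarrow> c \<in> carrier A \<Longrightarrow>
      himp A c (join A a b) = join A (himp A c a) (himp A c b)"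
  by (intro pointwise_eqI; simp add: h_simps closed h_less C_imp_identities)+

lemma D2_himp_refl: "u \<in> D2 A \<Longrightarrow> a \<in> carrier A \<Longrightarrow> u (himp A a a)"
  by (simp add: himp_refl D2_simps)

lemma D2_himp_mp:
  assumes u: "u \<in> D2 A" and ab: "a \<in> carrier A" "b \<in> carrier A" and "u a" "u (himp A a b)"
  shows "u b"
proof -
  have "u (meet A a (himp A a b))" using assms by (simp add: D2_simps closed)
  then show ?thesis using u ab by (simp add: meet_himp D2_simps)
qed

lemma D2_himp_trans:
  assumes u: "u \<in> D2 A" and abc: "a \<in> carrier A" "b \<in> carrier A" "c \<in> carrier A"
    and "u (himp A a b)" "u (himp A b c)"
  shows "u (himp A a c)"
proof -
  have "u (meet A (meet A (himp A a b) (himp A b c)) (himp A a c))"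
    using assms by (simp add: himp_trans D2_simps closed)
  then show ?thesis using u abc by (simp add: D2_simps closed)
qed

lemma D2_himp_of_true:
  assumes u: "u \<in> D2 A" and ab: "a \<in> carrier A" "b \<in> carrier A" and "u b"
  shows "u (himp A a b)"
  using D2_himp_mp[OF u ab(2) himp_closed[OF ab] \<open>u b\<close>] u ab by (simp add: himp_himp_self D2_simps)

lemma D2_hbot_himp: "u \<in> D2 A \<Longrightarrow> a \<in> carrier A \<Longrightarrow> u (himp A (hbot A) a)"
  by (simp add: hbot_himp D2_simps)

lemma D2_himp_meet_left:
  "u \<in> D2 A \<Longrightarrow> a \<in> carrier A \<Longrightarrow> b \<in> carrier A \<Longrightarrow> c \<in> carrier A \<Longrightarrow>
    u (himp A (meet A a b) c) \<longleftrightarrow> u (himp A a c) \<or> u (himp A b c)"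
  by (simp add: himp_meet_left D2_simps closed)

lemma D2_himp_join_right:
  "u \<in> D2 A \<Longrightarrow> a \<in> carrier A \<Longrightarrow> b \<in> carrier A \<Longrightarrow> c \<in> carrier A \<Longrightarrow>
    u (himp A c (join A a b)) \<longleftrightarrow> u (himp A c a) \<or> u (himp A c b)"
  by (simp add: himp_join_right D2_simps closed)

lemma D2_himp_himp_cases:
  assumes ab: "u \<in> D2 A" "a \<in> carrier A" "b \<in> carrier A"
  shows "u (himp A (himp A a b) b) \<or> u (himp A a b)"
proof -
  have "u (join A (himp A (himp A a b) b) (himp A a b))"
    using ab by (simp add: himp_himp_join D2_simps)
  with ab show ?thesis by (simp add: D2_simps closed)
qed

lemma himp_steps_join_closed: "set bs \<subseteq> carrier A \<Longrightarrow> himp_steps_join A bs \<in> carrier A"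
  by (induction bs rule: induct_list012) (simp_all add: closed)

lemma h_himp_steps_join:
  assumes "set bs \<subseteq> carrier A" "i \<in> I" "\<not> successively (\<lambda>p q. h q i < h p i) bs"
  shows "h (himp_steps_join A bs) i = n - 1"
  using assms
proof (induction bs rule: induct_list012)
  case (3 p q r)
  have pqr: "p \<in> carrier A" "q \<in> carrier A" "set r \<subseteq> carrier A" using "3.prems"(1) by auto
  have rest: "himp_steps_join A (q # r) \<in> carrier A" using pqr by (intro himp_steps_join_closed) simp
  have "h (himp_steps_join A (p # q # r)) i
      = max (C_imp n (h p i) (h q i)) (h (himp_steps_join A (q # r)) i)"
    using pqr rest \<open>i \<in> I\<close> by (simp add: h_simps closed)
  moreover have "h (himp_steps_join A (q # r)) i = n - 1" if "h q i < h p i"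
    using "3.IH"(2) "3.prems" pqr that by simp
  ultimately show ?case
    using h_less[OF rest \<open>i \<in> I\<close>] h_less[OF pqr(2) \<open>i \<in> I\<close>] by (auto simp: C_imp_def)
qed simp_all

text \<open>The equation of G_n that bounds the length of the quotient chain in the lifting below.\<close>

lemma himp_steps_join_eq_htop:
  assumes bs: "set bs \<subseteq> carrier A" and long: "n < length bs"
  shows "himp_steps_join A bs = htop A"
proof (rule pointwise_eqI)
  fix i assume i: "i \<in> I"
  have "\<not> successively (\<lambda>p q. h q i < h p i) bs"
  proof
    assume "successively (\<lambda>p q. h q i < h p i) bs"
    moreover have "bs \<noteq> []" using long by auto
    moreover have "h (hd bs) i < n" using \<open>bs \<noteq> []\<close> bs i by (intro h_less) auto
    ultimately show False using length_successively_descending long by fastforce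
  qed
  then show "h (himp_steps_join A bs) i = h (htop A) i"
    using h_himp_steps_join[OF bs i] i by (simp add: h_htop)
qed (simp_all add: himp_steps_join_closed bs closed)

lemma D2_himp_steps_join:
  assumes u: "u \<in> D2 A" and "set bs \<subseteq> carrier A" "u (himp_steps_join A bs)"
  shows "\<not> successively (\<lambda>p q. \<not> u (himp A p q)) bs"
  using assms(2,3)
proof (induction bs rule: induct_list012)
  case (3 p q r)
  then have "u (himp A p q) \<or> u (himp_steps_join A (q # r))"
    using u by (simp add: D2_simps closed himp_steps_join_closed)
  then show ?case using "3.IH"(2) "3.prems"(1) by auto
qed (simp_all add: D2_simps[OF u])

lemma D2_no_long_descending:
  assumes "u \<in> D2 A" "set bs \<subseteq> carrier A" "n < length bs"
  shows "\<not> successively (\<lambda>p q. \<not> u (himp A p q)) bs"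
  using assms by (intro D2_himp_steps_join) (simp_all add: himp_steps_join_eq_htop D2_simps)

section \<open>Lattice homomorphisms above omega o x\<close>

definition omega_comp :: "('a \<Rightarrow> nat) \<Rightarrow> 'a \<Rightarrow> bool" where
  "omega_comp x = (\<lambda>a\<in>carrier A. omega n (x a))"

definition threshold :: "('a \<Rightarrow> nat) \<Rightarrow> nat \<Rightarrow> 'a \<Rightarrow> bool" where
  "threshold x j = (\<lambda>a\<in>carrier A. j \<le> x a)"

lemma iota_eq: "iota n A x = (omega_comp x, x ` carrier A)"
  by (simp add: iota_def omega_comp_def)

lemma omega_comp_in_D2:
  assumes x: "x \<in> Hom_C n A"
  shows "omega_comp x \<in> D2 A"
  unfolding D2_def omega_comp_def using n_ge_2
  by (auto simp: Hom_C_simps[OF x] closed omega_def min_def max_def dest: Hom_C_less[OF x])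

lemma threshold_in_D2:
  assumes x: "x \<in> Hom_C n A" and j: "j \<in> x ` carrier A" "j \<noteq> 0"
  shows "threshold x j \<in> D2 A"
proof -
  have "j < n" using j Hom_C_less[OF x] by auto
  then show ?thesis using j(2) by (auto simp: D2_def threshold_def Hom_C_simps[OF x] closed)
qed

lemma threshold_in_up2:
  assumes x: "x \<in> Hom_C n A" and j: "j \<in> x ` carrier A" "j \<noteq> 0"
  shows "threshold x j \<in> up2 A (omega_comp x)"
proof -
  have "j < n" using j Hom_C_less[OF x] by auto
  then show ?thesis
    using threshold_in_D2[OF assms] by (auto simp: up2_def omega_comp_def omega_def threshold_def)
qed

lemma up2_omega_comp_mono:
  assumes x: "x \<in> Hom_C n A" and v: "v \<in> up2 A (omega_comp x)"
    and ab: "a \<in> carrier A" "b \<in> carrier A" "x a \<le> x b" and "v a"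
  shows "v b"
proof -
  have "omega_comp x (himp A a b)"
    using ab by (simp add: omega_comp_def omega_def Hom_C_simps[OF x] C_imp_def closed)
  then have "v (himp A a b)" using v ab by (simp add: up2_def closed)
  then show ?thesis using D2_himp_mp[of v a b] v ab \<open>v a\<close> by (simp add: up2_def)
qed

lemma up2_omega_comp_threshold:
  assumes x: "x \<in> Hom_C n A" and v: "v \<in> up2 A (omega_comp x)"
  obtains j where "j \<in> x ` carrier A" "j \<noteq> 0" "v = threshold x j"
proof -
  have vD2: "v \<in> D2 A" using v by (simp add: up2_def)
  define S where "S = x ` {a \<in> carrier A. v a}"
  have "finite S" using finite_Hom_C_range[OF x] by (rule finite_subset[rotated]) (auto simp: S_def)
  moreover have "S \<noteq> {}" using D2_simps(4)[OF vD2] htop_closed by (auto simp: S_def)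
  ultimately have "Min S \<in> S" by (rule Min_in)
  then obtain a0 where a0: "a0 \<in> carrier A" "v a0" "x a0 = Min S" unfolding S_def by auto
  have v_iff: "v b \<longleftrightarrow> x a0 \<le> x b" if "b \<in> carrier A" for b
    using that a0 up2_omega_comp_mono[OF x v a0(1) that] \<open>finite S\<close> by (auto simp: S_def)
  have "x a0 \<noteq> 0"
    using v_iff[OF hbot_closed] D2_simps(3)[OF vD2] by (simp add: Hom_C_simps[OF x])
  moreover have "v = threshold x (x a0)"
    by (intro ext) (auto simp: threshold_def v_iff D2_extensional[OF vD2])
  ultimately show thesis using a0(1) by (intro that) auto
qed

lemma up2_omega_comp:
  assumes x: "x \<in> Hom_C n A"
  shows "up2 A (omega_comp x) = threshold x ` (x ` carrier A - {0})"
proof (intro equalityI subsetI)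
  fix v assume "v \<in> up2 A (omega_comp x)"
  then obtain j where "j \<in> x ` carrier A" "j \<noteq> 0" "v = threshold x j"
    using up2_omega_comp_threshold[OF x] by metis
  then show "v \<in> threshold x ` (x ` carrier A - {0})" by simp
qed (auto intro: threshold_in_up2[OF x])

lemma inj_on_threshold: "inj_on (threshold x) (x ` carrier A)"
proof (rule inj_onI)
  fix j k assume "j \<in> x ` carrier A" "k \<in> x ` carrier A" "threshold x j = threshold x k"
  then obtain a b where "a \<in> carrier A" "b \<in> carrier A" "j = x a" "k = x b"
    "threshold x j a = threshold x k a" "threshold x j b = threshold x k b" by auto
  then show "j = k" by (simp add: threshold_def)
qed

lemma card_up2_omega_comp:
  assumes x: "x \<in> Hom_C n A"
  shows "card (up2 A (omega_comp x)) + 1 = card (x ` carrier A)"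
proof -
  have "card (up2 A (omega_comp x)) = card (x ` carrier A - {0})"
    unfolding up2_omega_comp[OF x] by (rule card_image) (meson Diff_subset inj_on_subset inj_on_threshold)
  moreover have "0 \<in> x ` carrier A" using Hom_C_simps(4)[OF x] hbot_closed by force
  moreover have "card (x ` carrier A) > 0"
    using calculation(2) finite_Hom_C_range[OF x] by (auto simp: card_gt_0_iff)
  ultimately show ?thesis using finite_Hom_C_range[OF x] by (simp add: card_Diff_singleton)
qed

text \<open>The thresholds holding at a are those at the nonzero values of x up to x a.\<close>

lemma card_up2_omega_comp_at:
  assumes x: "x \<in> Hom_C n A" and a: "a \<in> carrier A"
  shows "card {v \<in> up2 A (omega_comp x). v a} = rank (x ` carrier A) (x a)"
proof -
  let ?W = "x ` carrier A"
  have "{v \<in> up2 A (omega_comp x). v a} = threshold x ` {j \<in> ?W - {0}. j \<le> x a}"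
    unfolding up2_omega_comp[OF x] using a by (auto simp: threshold_def)
  then have "card {v \<in> up2 A (omega_comp x). v a} = card {j \<in> ?W - {0}. j \<le> x a}"
    by (simp add: card_image inj_on_subset[OF inj_on_threshold])
  also have "\<dots> = card ({j \<in> ?W. j \<le> x a} - {0})" by (rule arg_cong[where f = card]) auto
  also have "\<dots> = card {j \<in> ?W. j \<le> x a} - 1"
    using Hom_C_simps(4)[OF x] hbot_closed finite_Hom_C_range[OF x] by (intro card_Diff_singleton) force+
  also have "\<dots> = card ({j \<in> ?W. j \<le> x a} - {x a})"
    using a finite_Hom_C_range[OF x] by (intro card_Diff_singleton[symmetric]) auto
  also have "{j \<in> ?W. j \<le> x a} - {x a} = {j \<in> ?W. j < x a}" by auto
  finally show ?thesis by (simp add: rank_def)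
qed

end

section \<open>Lifting a lattice homomorphism to C_n\<close>

locale Gn_prime_filter = Gn_algebra +
  fixes u :: "'a \<Rightarrow> bool"
  assumes u_D2: "u \<in> D2 A"
begin

abbreviation above :: "'a \<Rightarrow> 'a \<Rightarrow> bool" where
  "above p q \<equiv> \<not> u (himp A p q)"

definition descending_chain :: "'a list \<Rightarrow> 'a \<Rightarrow> bool" where
  "descending_chain cs a \<longleftrightarrow> set cs \<subseteq> carrier A \<and> successively above (cs @ [a])"

text \<open>The height of a counts the classes of the total preorder u (himp A _ _) strictly above
  the class of a.\<close>

definition height :: "'a \<Rightarrow> nat" where
  "height a = Max (length ` {cs. descending_chain cs a})"

lemma length_descending_chain:
  assumes "a \<in> carrier A" "descending_chain cs a"
  shows "length cs \<le> n - 1"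
  using assms D2_no_long_descending[OF u_D2, of "cs @ [a]"] by (force simp: descending_chain_def)

lemma finite_chain_lengths: "a \<in> carrier A \<Longrightarrow> finite (length ` {cs. descending_chain cs a})"
  by (rule finite_subset[of _ "{..n - 1}"]) (auto dest: length_descending_chain)

lemma height_attained:
  assumes "a \<in> carrier A"
  obtains cs where "descending_chain cs a" "height a = length cs"
proof -
  have "descending_chain [] a" by (simp add: descending_chain_def)
  then have "height a \<in> length ` {cs. descending_chain cs a}"
    unfolding height_def using finite_chain_lengths[OF assms] by (intro Max_in) auto
  then show thesis using that by auto
qed

lemma height_ge: "a \<in> carrier A \<Longrightarrow> descending_chain cs a \<Longrightarrow> length cs \<le> height a"
  unfolding height_def using finite_chain_lengths by (intro Max_ge) auto

lemma height_le: "a \<in> carrier A \<Longrightarrow> height a \<le> n - 1"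
  by (metis height_attained length_descending_chain)

lemma height_antimono:
  assumes a: "a \<in> carrier A" and b: "b \<in> carrier A" and ab: "u (himp A a b)"
  shows "height b \<le> height a"
proof -
  obtain cs where cs: "descending_chain cs b" "height b = length cs" using height_attained[OF b] .
  have "descending_chain cs a"
  proof (cases "cs = []")
    case False
    then have "above (last cs) b" "last cs \<in> carrier A"
      using cs(1) by (auto simp: descending_chain_def successively_append_iff)
    then have "above (last cs) a" using D2_himp_trans[OF u_D2 _ a b _ ab] by blast
    then show ?thesis using cs(1) False by (simp add: descending_chain_def successively_append_iff)
  qed (simp add: descending_chain_def)
  then show ?thesis using cs(2) height_ge[OF a] by simp
qed

lemma height_strict_antimono:
  assumes a: "a \<in> carrier A" and b: "b \<in> carrier A" and ba: "above b a"
  shows "height b + 1 \<le> height a"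
proof -
  obtain cs where cs: "descending_chain cs b" "height b = length cs" using height_attained[OF b] .
  then have "descending_chain (cs @ [b]) a"
    using b ba by (simp add: descending_chain_def successively_append_iff)
  then show ?thesis using cs(2) height_ge[OF a] by fastforce
qed

lemma height_eq_0:
  assumes a: "a \<in> carrier A" and "u a"
  shows "height a = 0"
proof -
  obtain cs where cs: "descending_chain cs a" "height a = length cs" using height_attained[OF a] .
  have "cs = []"
  proof (rule ccontr)
    assume "cs \<noteq> []"
    then have "above (last cs) a" "last cs \<in> carrier A"
      using cs(1) by (auto simp: descending_chain_def successively_append_iff)
    then show False using D2_himp_of_true[OF u_D2 _ a \<open>u a\<close>] by blast
  qed
  then show ?thesis using cs(2) by simp
qed

lemma height_pos:
  assumes a: "a \<in> carrier A" and "\<not> u a"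
  shows "0 < height a"
proof -
  have "descending_chain [htop A] a"
    using assms by (simp add: descending_chain_def htop_himp htop_closed)
  then show ?thesis using height_ge[OF a] by fastforce
qed

text \<open>The class of hbot A is sent to 0 and every other class to n - 1 minus its height;
  the height of the bottom class may be smaller than n - 1, hence the case distinction.\<close>

definition lift :: "'a \<Rightarrow> nat" where
  "lift = (\<lambda>a\<in>carrier A. if u (himp A a (hbot A)) then 0 else n - 1 - height a)"

lemma lift_le_iff:
  assumes a: "a \<in> carrier A" and b: "b \<in> carrier A"
  shows "lift a \<le> lift b \<longleftrightarrow> u (himp A a b)"
proof (cases "u (himp A a (hbot A))")
  case True
  then show ?thesis
    using D2_himp_trans[OF u_D2 a hbot_closed b] D2_hbot_himp[OF u_D2 b] a by (simp add: lift_def)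
next
  case a_nonbot: False
  have "height a + 1 \<le> n - 1"
    using height_strict_antimono[OF hbot_closed a a_nonbot] height_le[OF hbot_closed] by simp
  show ?thesis
  proof (cases "u (himp A b (hbot A))")
    case True
    then have "\<not> u (himp A a b)" using D2_himp_trans[OF u_D2 a b hbot_closed] a_nonbot by blast
    then show ?thesis using True a_nonbot a b \<open>height a + 1 \<le> n - 1\<close> by (simp add: lift_def)
  next
    case b_nonbot: False
    have lift: "lift a = n - 1 - height a" "lift b = n - 1 - height b"
      using a_nonbot b_nonbot a b by (simp_all add: lift_def)
    show ?thesis
    proof (cases "u (himp A a b)")
      case True
      then show ?thesis using lift height_antimono[OF a b] by simp
    next
      case False
      then show ?thesis using lift height_strict_antimono[OF b a] height_le[OF b] by simp
    qed
  qed
qed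

lemma lift_eq_top_iff:
  assumes a: "a \<in> carrier A"
  shows "lift a = n - 1 \<longleftrightarrow> u a"
proof (cases "u (himp A a (hbot A))")
  case True
  then have "\<not> u a" using D2_himp_mp[OF u_D2 a hbot_closed] D2_simps(3)[OF u_D2] by blast
  then show ?thesis using True a n_ge_2 by (simp add: lift_def)
next
  case False
  then have "lift a = n - 1 - height a" using a by (simp add: lift_def)
  then show ?thesis
    using n_ge_2 height_le[OF a] height_eq_0[OF a] height_pos[OF a] by (cases "u a") auto
qed

lemma lift_in_Hom_C: "lift \<in> Hom_C n A"
proof -
  have le_iff: "lift a \<le> lift b \<longleftrightarrow> u (himp A a b)" if "a \<in> carrier A" "b \<in> carrier A" for a b
    using lift_le_iff that by blast
  have refl: "u (himp A a a)" if "a \<in> carrier A" for a using D2_himp_refl[OF u_D2 that] .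
  have ops: "lift (meet A a b) = min (lift a) (lift b) \<and> lift (join A a b) = max (lift a) (lift b) \<and>
      lift (himp A a b) = C_imp n (lift a) (lift b)" if a: "a \<in> carrier A" and b: "b \<in> carrier A" for a b
  proof (intro conjI)
    have "u (himp A a (meet A a b)) \<or> u (himp A b (meet A a b))"
      using D2_himp_meet_left[OF u_D2 a b meet_closed[OF a b]] refl[OF meet_closed[OF a b]] by blast
    then have "lift a \<le> lift (meet A a b) \<or> lift b \<le> lift (meet A a b)"
      using a b by (simp add: le_iff closed)
    moreover have "lift (meet A a b) \<le> lift a" "lift (meet A a b) \<le> lift b"
      using a b refl le_iff D2_himp_meet_left[OF u_D2 a b] by (simp_all add: closed)
    ultimately show "lift (meet A a b) = min (lift a) (lift b)" by linarith
    have "u (himp A (join A a b) a) \<or> u (himp A (join A a b) b)"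
      using D2_himp_join_right[OF u_D2 a b join_closed[OF a b]] refl[OF join_closed[OF a b]] by blast
    then have "lift (join A a b) \<le> lift a \<or> lift (join A a b) \<le> lift b"
      using a b by (simp add: le_iff closed)
    moreover have "lift a \<le> lift (join A a b)" "lift b \<le> lift (join A a b)"
      using a b refl le_iff D2_himp_join_right[OF u_D2 a b] by (simp_all add: closed)
    ultimately show "lift (join A a b) = max (lift a) (lift b)" by linarith
    show "lift (himp A a b) = C_imp n (lift a) (lift b)"
    proof (cases "u (himp A a b)")
      case True
      then show ?thesis using le_iff[OF a b] lift_eq_top_iff[OF himp_closed[OF a b]] by (simp add: C_imp_def)
    next
      case False
      have "u (himp A b (himp A a b))" using a b by (simp add: himp_himp_self D2_simps[OF u_D2])
      then have "lift (himp A a b) = lift b"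
        using False D2_himp_himp_cases[OF u_D2 a b] le_iff[OF himp_closed[OF a b] b]
          le_iff[OF b himp_closed[OF a b]] by simp
      then show ?thesis using False le_iff[OF a b] by (simp add: C_imp_def)
    qed
  qed
  have "lift (hbot A) = 0" using refl[OF hbot_closed] by (simp add: lift_def hbot_closed)
  moreover have "lift (htop A) = n - 1" using lift_eq_top_iff[OF htop_closed] D2_simps(4)[OF u_D2] by simp
  moreover have "lift \<in> carrier A \<rightarrow>\<^sub>E {..<n}" using n_ge_2 by (auto simp: lift_def)
  ultimately show ?thesis using ops by (simp add: Hom_C_def)
qed

lemma omega_comp_lift: "omega_comp lift = u"
  using lift_eq_top_iff D2_extensional[OF u_D2]
  by (intro ext) (simp add: omega_comp_def omega_def)

end

context Gn_algebra
begin

lemma omega_comp_Hom_C: "omega_comp ` Hom_C n A = D2 A"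
proof (intro equalityI subsetI)
  fix u assume "u \<in> D2 A"
  then interpret Gn_prime_filter n A I h u by unfold_locales
  show "u \<in> omega_comp ` Hom_C n A" using lift_in_Hom_C omega_comp_lift by (metis imageI)
qed (auto intro: omega_comp_in_D2)

section \<open>The bijection\<close>

lemma iota_in_T_set:
  assumes x: "x \<in> Hom_C n A"
  shows "iota n A x \<in> T_set n A"
proof -
  have "0 \<in> x ` carrier A" "n - 1 \<in> x ` carrier A"
    using Hom_C_simps(4,5)[OF x] hbot_closed htop_closed by (metis imageI)+
  then show ?thesis using omega_comp_in_D2[OF x] Hom_C_range_subset[OF x] card_up2_omega_comp[OF x]
    by (simp add: iota_eq T_set_def)
qed

lemma gamma_omega_comp:
  assumes x: "x \<in> Hom_C n A"
  shows "gamma A (omega_comp x, V) = (\<lambda>a\<in>carrier A. sorted_list_of_set V ! rank (x ` carrier A) (x a))"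
  using card_up2_omega_comp_at[OF x] by (auto simp: gamma_def)

lemma gamma_iota:
  assumes x: "x \<in> Hom_C n A"
  shows "gamma A (iota n A x) = x"
  using sorted_list_of_set_nth_rank[OF finite_Hom_C_range[OF x]] Hom_C_extensional[OF x]
  by (intro ext) (simp add: iota_eq gamma_omega_comp[OF x])

lemma Hom_C_comp_strict_mono:
  assumes x: "x \<in> Hom_C n A" and mono: "strict_mono_on (x ` carrier A) \<sigma>"
    and range: "\<sigma> ` x ` carrier A \<subseteq> {..<n}" and "\<sigma> 0 = 0" "\<sigma> (n - 1) = n - 1"
  shows "(\<lambda>a\<in>carrier A. \<sigma> (x a)) \<in> Hom_C n A"
proof -
  have le_iff: "\<sigma> (x a) \<le> \<sigma> (x b) \<longleftrightarrow> x a \<le> x b" if "a \<in> carrier A" "b \<in> carrier A" for a b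
    using strict_mono_on_less_eq[OF mono] that by simp
  show ?thesis
    using range le_iff assms(4,5)
    by (auto simp: Hom_C_def Hom_C_simps[OF x] closed C_imp_def min_def max_def)
qed

lemma gamma_T_set:
  assumes t: "t \<in> T_set n A"
  shows "gamma A t \<in> Hom_C n A \<and> iota n A (gamma A t) = t"
proof -
  obtain u V where t_eq: "t = (u, V)" and u: "u \<in> D2 A" and V: "V \<subseteq> {..<n}" "0 \<in> V" "n - 1 \<in> V"
    and card_V: "card (up2 A u) + 1 = card V"
    using t by (auto simp: T_set_def)
  obtain x where x: "x \<in> Hom_C n A" and u_eq: "u = omega_comp x"
    using u omega_comp_Hom_C by auto
  define W where "W = x ` carrier A"
  define \<sigma> where "\<sigma> = (\<lambda>y. sorted_list_of_set V ! rank W y)"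
  have fin: "finite W" "finite V"
    using finite_Hom_C_range[OF x] finite_subset[OF V(1)] by (simp_all add: W_def)
  have W: "W \<subseteq> {..<n}" "0 \<in> W" "n - 1 \<in> W"
    using iota_in_T_set[OF x] by (simp_all add: iota_eq T_set_def W_def)
  have card: "card W = card V"
    using card_up2_omega_comp[OF x] card_V by (simp add: u_eq W_def)
  have mono: "strict_mono_on W \<sigma>" and img: "\<sigma> ` W = V"
    using sorted_list_of_set_rank_iso[OF fin card] by (simp_all add: \<sigma>_def)
  have "\<sigma> 0 = 0"
    using sorted_list_of_set_nth_rank[OF fin(2) V(2)] by (simp add: \<sigma>_def rank_def)
  have "\<sigma> (n - 1) = n - 1"
    using sorted_list_of_set_nth_rank[OF fin(2) V(3)] rank_greatest[OF fin(1) W(3)]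
      rank_greatest[OF fin(2) V(3)] W(1) V(1) card by (force simp: \<sigma>_def)
  have gamma_eq: "gamma A t = (\<lambda>a\<in>carrier A. \<sigma> (x a))"
    by (simp add: t_eq u_eq gamma_omega_comp[OF x] \<sigma>_def W_def)
  have top_iff: "\<sigma> (x a) = n - 1 \<longleftrightarrow> x a = n - 1" if "a \<in> carrier A" for a
    using strict_mono_on_eq[OF mono, of "x a" "n - 1"] W(3) that \<open>\<sigma> (n - 1) = n - 1\<close>
    by (simp add: W_def)
  have "omega_comp (gamma A t) = u"
    using top_iff by (intro ext) (simp add: gamma_eq u_eq omega_comp_def omega_def)
  moreover have "gamma A t ` carrier A = V"
    using img by (simp add: gamma_eq W_def image_image)
  moreover have "gamma A t \<in> Hom_C n A"
    unfolding gamma_eq using mono img V(1) \<open>\<sigma> 0 = 0\<close> \<open>\<sigma> (n - 1) = n - 1\<close>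
    by (intro Hom_C_comp_strict_mono[OF x]) (simp_all add: W_def)
  ultimately show ?thesis by (simp add: iota_eq t_eq)
qed

end

theorem lemma2p2:
  fixes n :: nat and A :: "'a heyting_alg" and I :: "'i set"
  assumes "n \<ge> 2" and "in_Gn n I A"
  shows "(\<forall>x\<in>Hom_C n A. iota n A x \<in> T_set n A)
       \<and> (\<forall>t\<in>T_set n A. gamma A t \<in> Hom_C n A)
       \<and> (\<forall>x\<in>Hom_C n A. gamma A (iota n A x) = x)
       \<and> (\<forall>t\<in>T_set n A. iota n A (gamma A t) = t)
       \<and> bij_betw (iota n A) (Hom_C n A) (T_set n A)
       \<and> (\<lambda>x. \<lambda>a\<in>carrier A. omega n (x a)) ` Hom_C n A = D2 A"
proof -
  obtain h where "Gn_algebra n A I h" using in_Gn_imp_Gn_algebra[OF assms] .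
  then interpret Gn_algebra n A I h .
  have "bij_betw (iota n A) (Hom_C n A) (T_set n A)"
    using iota_in_T_set gamma_T_set gamma_iota by (intro bij_betwI[where g = "gamma A"]) auto
  then show ?thesis
    using iota_in_T_set gamma_T_set gamma_iota omega_comp_Hom_C by (simp add: omega_comp_def)
qed

end
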